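(* Let $\sigma$ be the substitution on $\{0,1\}$ given by $\sigma(0)=01$, $\sigma(1)=00$, let $X_\sigma\subset\{0,1\}^{\mathbb Z}$ be its subshift with shift map $S$, and let $T(x,z)=(Sx,z+1)$ on $X_\sigma\times\mathbb Z_3$. Then the minimal Cantor system $(X_\sigma\times\mathbb Z_3,T)$ is self-induced.
   Context: $X_\sigma$ is the set of bi-infinite sequences over $\{0,1\}$ all of whose finite subwords are subwords of $\sigma^k(a)$ for some letter $a$ and $k\ge1$; $S(x)_i=x_{i+1}$; $\mathbb Z_3$ is the $3$-adic integers. The system $(X_\sigma\times\mathbb Z_3,T)$ is a minimal Cantor system (a fact established separately in the paper). A minimal Cantor system $(X,T)$ is self-induced if there is a nonempty clopen proper $U\subsetneq X$ such that $(U,T_U)$, $T_U(x)=T^{r_U(x)}x$ with $r_U(x)=\inf\{n>0:T^nx\in U\}$, is topologically conjugate to $(X,T)$. *)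

theory Defs
  imports "HOL-Analysis.Analysis"
begin

definition return_time :: "('a \<Rightarrow> 'a) \<Rightarrow> 'a set \<Rightarrow> 'a \<Rightarrow> nat" where
  "return_time T U x = (LEAST n. n > 0 \<and> (T ^^ n) x \<in> U)"

definition induced_map :: "('a \<Rightarrow> 'a) \<Rightarrow> 'a set \<Rightarrow> 'a \<Rightarrow> 'a" where
  "induced_map T U x = (T ^^ return_time T U x) x"

definition top_conjugate ::
  "'a topology \<Rightarrow> ('a \<Rightarrow> 'a) \<Rightarrow> 'b topology \<Rightarrow> ('b \<Rightarrow> 'b) \<Rightarrow> bool" where
  "top_conjugate X T Y R \<longleftrightarrow>
     (\<exists>h. homeomorphic_map X Y h \<and> (\<forall>x\<in>topspace X. h (T x) = R (h x)))"

definition self_induced :: "'a topology \<Rightarrow> ('a \<Rightarrow> 'a) \<Rightarrow> bool" where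
  "self_induced X T \<longleftrightarrow>
     (\<exists>U. U \<noteq> {} \<and> U \<subset> topspace X \<and> openin X U \<and> closedin X U \<and>
          top_conjugate X T (subtopology X U) (induced_map T U))"

fun sigma :: "nat \<Rightarrow> nat list" where
  "sigma a = (if a = 0 then [0, 1] else [0, 0])"

definition sigma_word :: "nat list \<Rightarrow> nat list" where
  "sigma_word w = concat (map sigma w)"

definition sigma_language :: "nat list set" where
  "sigma_language = {w. \<exists>a\<in>{0,1}. \<exists>k\<ge>1. \<exists>u v. (sigma_word ^^ k) [a] = u @ w @ v}"

definition X_sigma :: "(int \<Rightarrow> nat) set" where
  "X_sigma = {x. (\<forall>i. x i \<in> {0,1}) \<and>
     (\<forall>i (n::nat). map (\<lambda>j. x (i + int j)) [0..<n] \<in> sigma_language)}"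

definition X_sigma_top :: "(int \<Rightarrow> nat) topology" where
  "X_sigma_top = subtopology (product_topology (\<lambda>_::int. discrete_topology {0::nat,1}) UNIV) X_sigma"

definition shift :: "(int \<Rightarrow> nat) \<Rightarrow> (int \<Rightarrow> nat)" where
  "shift x = (\<lambda>i. x (i + 1))"

section \<open>3-adic integers as the inverse limit of Z/3^n Z\<close>

definition Z3 :: "(nat \<Rightarrow> nat) set" where
  "Z3 = {a. \<forall>n. a n < 3 ^ n \<and> a n = a (Suc n) mod 3 ^ n}"

definition Z3_top :: "(nat \<Rightarrow> nat) topology" where
  "Z3_top = subtopology (product_topology (\<lambda>n. discrete_topology {..<(3::nat) ^ n}) UNIV) Z3"

definition Z3_plus1 :: "(nat \<Rightarrow> nat) \<Rightarrow> (nat \<Rightarrow> nat)" where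
  "Z3_plus1 a = (\<lambda>n. (a n + 1) mod 3 ^ n)"

definition T_map :: "(int \<Rightarrow> nat) \<times> (nat \<Rightarrow> nat) \<Rightarrow> (int \<Rightarrow> nat) \<times> (nat \<Rightarrow> nat)" where
  "T_map p = (shift (fst p), Z3_plus1 (snd p))"

end

theory Submission
  imports Defs
begin

text \<open>
  Put \<open>C = {x \<in> X\<^sub>\<sigma>. x\<^sub>0 = x\<^sub>2 = 0}\<close>. Nonzero letters of a point of \<open>X\<^sub>\<sigma>\<close> sit at positions
  of equal parity and occur in every window of length 4, so the points of \<open>C\<close> are exactly the
  sequences with zeros at all even positions, i.e. the images \<open>\<sigma>(x)\<close>, \<open>x \<in> X\<^sub>\<sigma>\<close>; in particular
  \<open>C\<close> is a clopen cylinder. Orbits starting in \<open>C \<times> \<int>\<^sub>3\<close> return to it after exactly two steps and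
  \<open>S\<^sup>2 \<circ> \<sigma> = \<sigma> \<circ> S\<close>. As 2 is a unit of \<open>\<int>\<^sub>3\<close>, the map \<open>(x, z) \<mapsto> (\<sigma>(x), 2z)\<close> is a
  homeomorphism onto \<open>C \<times> \<int>\<^sub>3\<close> conjugating \<open>T\<close> with the induced map.
\<close>

section \<open>Words generated by the substitution\<close>

lemma sigma_word_Nil [simp]: "sigma_word [] = []"
  by (simp add: sigma_word_def)

lemma sigma_word_append [simp]: "sigma_word (u @ v) = sigma_word u @ sigma_word v"
  by (simp add: sigma_word_def)

lemma sigma_word_Cons: "sigma_word (a # w) = sigma a @ sigma_word w"
  by (simp add: sigma_word_def)

lemma length_sigma_word [simp]: "length (sigma_word w) = 2 * length w"
  by (induction w) (auto simp: sigma_word_Cons)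

lemma nth_sigma_word:
  "i < 2 * length w \<Longrightarrow>
   sigma_word w ! i = (if even i then 0 else if w ! (i div 2) = 0 then 1 else 0)"
proof (induction w arbitrary: i)
  case Nil
  then show ?case by simp
next
  case (Cons a w)
  show ?case
  proof (cases "i < 2")
    case True
    then have "i = 0 \<or> i = 1" by auto
    then show ?thesis by (auto simp: sigma_word_Cons)
  next
    case False
    then have "sigma_word (a # w) ! i = sigma_word w ! (i - 2)"
      by (simp add: sigma_word_Cons nth_append numeral_2_eq_2)
    also have "\<dots> = (if even (i - 2) then 0 else if w ! ((i - 2) div 2) = 0 then 1 else 0)"
      using Cons False by auto
    also have "\<dots> = (if even i then 0 else if (a # w) ! (i div 2) = 0 then 1 else 0)"
    proof -
      have "(i - 2) div 2 = i div 2 - 1" "i div 2 \<noteq> 0" "even (i - 2) = even i"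
        using False by auto
      then show ?thesis by (simp add: nth_Cons')
    qed
    finally show ?thesis .
  qed
qed

abbreviation sigma_pow :: "nat \<Rightarrow> nat \<Rightarrow> nat list" where
  "sigma_pow k a \<equiv> (sigma_word ^^ k) [a]"

lemma sigma_pow_Suc: "sigma_pow (Suc k) a = sigma_word (sigma_pow k a)"
  by simp

lemma length_sigma_pow [simp]: "length (sigma_pow k a) = 2 ^ k"
  by (induction k) auto

lemma sigma_pow_letters: "a \<in> {0,1} \<Longrightarrow> j < 2 ^ k \<Longrightarrow> sigma_pow k a ! j \<in> {0,1}"
proof (induction k arbitrary: j)
  case 0
  then show ?case by simp
next
  case (Suc k)
  then show ?case by (simp only: sigma_pow_Suc, subst nth_sigma_word) auto
qed

lemma sigma_pow_even_zero:
  assumes "k \<ge> 1" "j < 2 ^ k" "even j"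
  shows "sigma_pow k a ! j = 0"
proof -
  obtain m where k: "k = Suc m" using assms(1) by (cases k) auto
  show ?thesis using assms(2,3) unfolding k sigma_pow_Suc by (subst nth_sigma_word) auto
qed

lemma sigma_pow_no_adjacent_nonzero:
  assumes "Suc j < 2 ^ k"
  shows "sigma_pow k a ! j = 0 \<or> sigma_pow k a ! Suc j = 0"
proof (cases k)
  case 0
  then show ?thesis using assms by simp
next
  case (Suc m)
  then show ?thesis
    using assms sigma_pow_even_zero[of k j a] sigma_pow_even_zero[of k "Suc j" a]
    by (cases "even j") auto
qed

text \<open>A zero at an odd position \<open>q\<close> of \<open>\<sigma>\<^sup>k\<^sup>+\<^sup>1(a)\<close> comes from a one at position \<open>q div 2\<close>
  of \<open>\<sigma>\<^sup>k(a)\<close>, and ones are never adjacent.\<close>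
lemma sigma_pow_no_zeros_at_distance_two:
  assumes "odd q" "q + 2 < 2 ^ Suc k"
  shows "sigma_pow (Suc k) a ! q \<noteq> 0 \<or> sigma_pow (Suc k) a ! (q + 2) \<noteq> 0"
proof (rule ccontr)
  assume "\<not> ?thesis"
  then have "sigma_pow k a ! (q div 2) \<noteq> 0" "sigma_pow k a ! ((q + 2) div 2) \<noteq> 0"
    using assms unfolding sigma_pow_Suc
    by (subst (asm) nth_sigma_word, simp, simp split: if_splits)+
  moreover have "(q + 2) div 2 = Suc (q div 2)" "Suc (q div 2) < 2 ^ k"
    using assms by auto
  ultimately show False using sigma_pow_no_adjacent_nonzero[of "q div 2" k a] by simp
qed

lemma funpow_sigma_word_append:
  "(sigma_word ^^ k) (u @ v) = (sigma_word ^^ k) u @ (sigma_word ^^ k) v"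
  by (induction k) auto

lemma sigma_pow_Suc_split:
  "sigma_pow (Suc k) a = sigma_pow k 0 @ sigma_pow k (if a = 0 then 1 else 0)"
proof -
  have "sigma_pow (Suc k) a = (sigma_word ^^ k) (sigma_word [a])"
    by (simp add: funpow_Suc_right del: funpow.simps)
  also have "sigma_word [a] = [0] @ [if a = 0 then 1 else 0]"
    by (simp add: sigma_word_def)
  finally show ?thesis by (simp only: funpow_sigma_word_append)
qed

section \<open>The language and the subshift\<close>

lemma sigma_language_iff:
  "w \<in> sigma_language \<longleftrightarrow>
   (\<exists>a\<in>{0,1}. \<exists>k\<ge>1. \<exists>p. p + length w \<le> 2 ^ k \<and>
      (\<forall>j<length w. sigma_pow k a ! (p + j) = w ! j))"
proof
  assume "w \<in> sigma_language"
  then obtain a k u v where a: "a \<in> {0,1}" "k \<ge> 1" and e: "sigma_pow k a = u @ w @ v"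
    unfolding sigma_language_def by blast
  have "length u + length w \<le> 2 ^ k" using arg_cong[OF e, of length] by simp
  moreover have "\<forall>j<length w. sigma_pow k a ! (length u + j) = w ! j"
    using e by (simp add: nth_append)
  ultimately show "\<exists>a\<in>{0,1}. \<exists>k\<ge>1. \<exists>p. p + length w \<le> 2 ^ k \<and>
      (\<forall>j<length w. sigma_pow k a ! (p + j) = w ! j)"
    using a by blast
next
  assume "\<exists>a\<in>{0,1}. \<exists>k\<ge>1. \<exists>p. p + length w \<le> 2 ^ k \<and>
      (\<forall>j<length w. sigma_pow k a ! (p + j) = w ! j)"
  then obtain a k p where a: "a \<in> {0,1}" "k \<ge> 1" and p: "p + length w \<le> 2 ^ k"
    and e: "\<forall>j<length w. sigma_pow k a ! (p + j) = w ! j" by blast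
  have "w = take (length w) (drop p (sigma_pow k a))"
    by (rule nth_equalityI) (use p e in auto)
  then have "sigma_pow k a = take p (sigma_pow k a) @ w @ drop (p + length w) (sigma_pow k a)"
    by (metis append_take_drop_id drop_drop add.commute)
  then show "w \<in> sigma_language" unfolding sigma_language_def using a by blast
qed

lemma X_sigma_iff:
  "x \<in> X_sigma \<longleftrightarrow> (\<forall>i. x i \<in> {0,1}) \<and>
     (\<forall>i n. \<exists>a\<in>{0,1}. \<exists>k\<ge>1. \<exists>p. p + n \<le> 2 ^ k \<and>
        (\<forall>j<n. sigma_pow k a ! (p + j) = x (i + int j)))"
  unfolding X_sigma_def sigma_language_iff by simp

lemma X_sigma_occurrence:
  assumes "x \<in> X_sigma"
  obtains a k p where "a \<in> {0,1}" "k \<ge> 1" "p + n \<le> 2 ^ k"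
    "\<And>j. j < n \<Longrightarrow> sigma_pow k a ! (p + j) = x (i + int j)"
  using assms unfolding X_sigma_iff by meson

lemma X_sigma_letters: "x \<in> X_sigma \<Longrightarrow> x i \<in> {0,1}"
  unfolding X_sigma_iff by blast

lemma X_sigma_nonzero_even_distance:
  assumes "x \<in> X_sigma" "x i \<noteq> 0" "x (i + int d) \<noteq> 0"
  shows "even d"
proof -
  obtain a k p where "a \<in> {0,1}" and k: "k \<ge> 1" "p + Suc d \<le> 2 ^ k"
    and e: "\<And>j. j < Suc d \<Longrightarrow> sigma_pow k a ! (p + j) = x (i + int j)"
    using X_sigma_occurrence[OF assms(1), of "Suc d" i] by blast
  have bounds: "p < 2 ^ k" "p + d < 2 ^ k" using k(2) by simp_all
  have "odd p"
  proof
    assume "even p"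
    then have "sigma_pow k a ! p = 0" using sigma_pow_even_zero[OF k(1) bounds(1)] by blast
    then show False using e[of 0] assms(2) by simp
  qed
  moreover have "odd (p + d)"
  proof
    assume "even (p + d)"
    then have "sigma_pow k a ! (p + d) = 0" using sigma_pow_even_zero[OF k(1) bounds(2)] by blast
    then show False using e[of d] assms(3) by simp
  qed
  ultimately show ?thesis by simp
qed

lemma X_sigma_nonzero_even_diff:
  assumes "x \<in> X_sigma" "x i \<noteq> 0" "x i' \<noteq> 0"
  shows "even (i' - i)"
proof -
  have ordered: "even (j' - j)" if "j \<le> j'" "x j \<noteq> 0" "x j' \<noteq> 0" for j j'
  proof -
    have "x (j + int (nat (j' - j))) \<noteq> 0" using that by simp
    then have "even (nat (j' - j))"
      using X_sigma_nonzero_even_distance[OF assms(1) that(2)] by blast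
    then show ?thesis using that(1) by (simp add: even_nat_iff)
  qed
  show ?thesis
  proof (cases "i \<le> i'")
    case True
    then show ?thesis using ordered assms by blast
  next
    case False
    then have "even (i - i')" using ordered assms by simp
    then show ?thesis by (metis even_minus minus_diff_eq)
  qed
qed

lemma X_sigma_no_adjacent_nonzero: "x \<in> X_sigma \<Longrightarrow> x i = 0 \<or> x (i + 1) = 0"
  using X_sigma_nonzero_even_distance[of x i 1] by auto

lemma X_sigma_nonzero_in_window: assumes "x \<in> X_sigma" shows "\<exists>j<4. x (i + int j) \<noteq> 0"
proof (rule ccontr)
  assume "\<not> ?thesis"
  then have zero: "\<And>j. j < 4 \<Longrightarrow> x (i + int j) = 0" by blast
  obtain a k p where "a \<in> {0,1}" and k: "k \<ge> 1" "p + 4 \<le> 2 ^ k"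
    and e: "\<And>j. j < 4 \<Longrightarrow> sigma_pow k a ! (p + j) = x (i + int j)"
    using X_sigma_occurrence[OF assms, of 4 i] by blast
  obtain m where km: "k = Suc m" using k by (cases k) auto
  define q where "q = (if odd p then p else p + 1)"
  have q: "odd q" "p \<le> q" "q + 2 \<le> p + 3" unfolding q_def by auto
  have "sigma_pow k a ! q = 0" "sigma_pow k a ! (q + 2) = 0"
    using e[of "q - p"] zero[of "q - p"] e[of "q + 2 - p"] zero[of "q + 2 - p"] q by simp_all
  then show False
    using sigma_pow_no_zeros_at_distance_two[of q m a] q k unfolding km by simp
qed

lemma X_sigma_even_zero:
  assumes "x \<in> X_sigma" "x 0 = 0" "x 2 = 0"
  shows "x (2 * i) = 0"
proof (rule ccontr)
  assume nonzero: "x (2 * i) \<noteq> 0"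
  obtain j where j: "j < 4" "x (int j) \<noteq> 0"
    using X_sigma_nonzero_in_window[OF assms(1), of 0] by auto
  then have "j = 1 \<or> j = 3" using assms by (auto simp: less_Suc_eq numeral_eq_Suc)
  moreover have "even (int j - 2 * i)" using X_sigma_nonzero_even_diff[OF assms(1) nonzero j(2)] .
  ultimately show False by auto
qed

lemma shift_in_X_sigma:
  assumes "x \<in> X_sigma"
  shows "shift x \<in> X_sigma"
  unfolding X_sigma_iff
proof (intro conjI allI)
  fix i
  show "shift x i \<in> {0,1}" using X_sigma_letters[OF assms] by (simp add: shift_def)
next
  fix i n
  obtain a k p where "a \<in> {0,1}" "k \<ge> 1" "p + n \<le> 2 ^ k"
    and e: "\<And>j. j < n \<Longrightarrow> sigma_pow k a ! (p + j) = x (i + 1 + int j)"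
    using X_sigma_occurrence[OF assms, of n "i + 1"] by blast
  moreover have "\<forall>j<n. sigma_pow k a ! (p + j) = shift x (i + int j)"
    using e by (simp add: shift_def add_ac)
  ultimately show "\<exists>a\<in>{0,1}. \<exists>k\<ge>1. \<exists>p. p + n \<le> 2 ^ k \<and>
      (\<forall>j<n. sigma_pow k a ! (p + j) = shift x (i + int j))"
    by blast
qed

definition sigma_seq :: "(int \<Rightarrow> nat) \<Rightarrow> int \<Rightarrow> nat" where
  "sigma_seq x = (\<lambda>i. if even i then 0 else if x (i div 2) = 0 then 1 else 0)"

definition desubstitute :: "(int \<Rightarrow> nat) \<Rightarrow> int \<Rightarrow> nat" where
  "desubstitute x = (\<lambda>j. if x (2 * j + 1) = 0 then 1 else 0)"

lemma sigma_seq_in_X_sigma: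
  assumes "x \<in> X_sigma"
  shows "sigma_seq x \<in> X_sigma"
  unfolding X_sigma_iff
proof (intro conjI allI)
  fix i
  show "sigma_seq x i \<in> {0,1}" by (simp add: sigma_seq_def)
next
  fix i :: int and n :: nat
  define m where "m = i div 2"
  define r where "r = nat (i mod 2)"
  have im: "i = 2 * m + int r" and r: "r < 2" unfolding m_def r_def by simp_all
  obtain a k p where a: "a \<in> {0,1}" "k \<ge> 1" "p + Suc n \<le> 2 ^ k"
    and e: "\<And>j. j < Suc n \<Longrightarrow> sigma_pow k a ! (p + j) = x (m + int j)"
    using X_sigma_occurrence[OF assms, of "Suc n" m] by blast
  have "\<forall>j<n. sigma_pow (Suc k) a ! (2 * p + r + j) = sigma_seq x (i + int j)"
  proof (intro allI impI)
    fix j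
    assume j: "j < n"
    have "sigma_pow (Suc k) a ! (2 * p + r + j) =
       (if even (r + j) then 0 else if sigma_pow k a ! (p + (r + j) div 2) = 0 then 1 else 0)"
    proof -
      have "(2 * p + r + j) div 2 = p + (r + j) div 2" "even (2 * p + r + j) = even (r + j)"
        by auto
      then show ?thesis unfolding sigma_pow_Suc using a r j by (subst nth_sigma_word) auto
    qed
    also have "sigma_pow k a ! (p + (r + j) div 2) = x (m + int ((r + j) div 2))"
      using e[of "(r + j) div 2"] r j by simp
    also have "(if even (r + j) then 0 else if x (m + int ((r + j) div 2)) = 0 then 1 else 0)
        = sigma_seq x (i + int j)"
    proof -
      have "i + int j = 2 * m + int (r + j)" using im by simp
      moreover have "(2 * m + int (r + j)) div 2 = m + int ((r + j) div 2)" by simp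
      moreover have "even (2 * m + int (r + j)) = even (r + j)" by simp
      ultimately show ?thesis unfolding sigma_seq_def by presburger
    qed
    finally show "sigma_pow (Suc k) a ! (2 * p + r + j) = sigma_seq x (i + int j)" .
  qed
  moreover have "2 * p + r + n \<le> 2 ^ Suc k" "Suc k \<ge> 1" using a r by simp_all
  ultimately show "\<exists>a\<in>{0,1}. \<exists>k\<ge>1. \<exists>p. p + n \<le> 2 ^ k \<and>
      (\<forall>j<n. sigma_pow k a ! (p + j) = sigma_seq x (i + int j))"
    using a(1) by blast
qed

lemma desubstitute_in_X_sigma:
  assumes "x \<in> X_sigma" "\<And>i. x (2 * i) = 0"
  shows "desubstitute x \<in> X_sigma"
  unfolding X_sigma_iff
proof (intro conjI allI)
  fix i
  show "desubstitute x i \<in> {0,1}" by (simp add: desubstitute_def)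
next
  fix m n
  obtain a k p where a: "a \<in> {0,1}" "k \<ge> 1" "p + (2 * n + 4) \<le> 2 ^ k"
    and e: "\<And>j. j < 2 * n + 4 \<Longrightarrow> sigma_pow k a ! (p + j) = x (2 * m + int j)"
    using X_sigma_occurrence[OF assms(1), of "2 * n + 4" "2 * m"] by blast
  obtain l where kl: "k = Suc l" using a by (cases k) auto
  have len: "p + 2 * n + 4 \<le> 2 * 2 ^ l" using a kl by simp
  have "even p"
  proof (rule ccontr)
    assume "odd p"
    moreover have "sigma_pow k a ! p = 0" "sigma_pow k a ! (p + 2) = 0"
      using e[of 0] e[of 2] assms(2)[of m] assms(2)[of "m + 1"] by (simp_all add: algebra_simps)
    ultimately show False using sigma_pow_no_zeros_at_distance_two[of p l a] len kl by simp
  qed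
  then obtain q where pq: "p = 2 * q" by blast
  have "\<forall>j<n. sigma_pow l a ! (q + j) = desubstitute x (m + int j)"
  proof (intro allI impI)
    fix j
    assume j: "j < n"
    have "x (2 * (m + int j) + 1) = sigma_pow k a ! (p + (2 * j + 1))"
      using e[of "2 * j + 1"] j by (simp add: algebra_simps)
    also have "\<dots> = (if sigma_pow l a ! (q + j) = 0 then 1 else 0)"
      unfolding kl sigma_pow_Suc using len j pq by (subst nth_sigma_word) auto
    finally have "x (2 * (m + int j) + 1) = (if sigma_pow l a ! (q + j) = 0 then 1 else 0)" .
    moreover have "sigma_pow l a ! (q + j) \<in> {0,1}"
      using sigma_pow_letters[OF a(1), of "q + j" l] len pq j by simp
    ultimately show "sigma_pow l a ! (q + j) = desubstitute x (m + int j)"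
      unfolding desubstitute_def by auto
  qed
  moreover have "q + n \<le> 2 ^ l" "l \<ge> 1" using len pq by (auto simp: Suc_le_eq intro: ccontr)
  ultimately show "\<exists>a\<in>{0,1}. \<exists>k\<ge>1. \<exists>p. p + n \<le> 2 ^ k \<and>
      (\<forall>j<n. sigma_pow k a ! (p + j) = desubstitute x (m + int j))"
    using a(1) by blast
qed

lemma desubstitute_sigma_seq:
  assumes "x \<in> X_sigma"
  shows "desubstitute (sigma_seq x) = x"
proof
  fix j
  have "x j \<in> {0,1}" "(2 * j + 1) div 2 = j" using X_sigma_letters[OF assms] by simp_all
  then show "desubstitute (sigma_seq x) j = x j" by (auto simp: desubstitute_def sigma_seq_def)
qed

lemma sigma_seq_desubstitute:
  assumes "x \<in> X_sigma" "\<And>i. x (2 * i) = 0"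
  shows "sigma_seq (desubstitute x) = x"
proof
  fix i
  show "sigma_seq (desubstitute x) i = x i"
  proof (cases "even i")
    case True
    then obtain j where "i = 2 * j" by blast
    then show ?thesis using assms(2) by (simp add: sigma_seq_def)
  next
    case False
    then have "2 * (i div 2) + 1 = i" by simp
    then have "sigma_seq (desubstitute x) i = (if x i = 0 then 0 else 1)"
      using False by (simp add: sigma_seq_def desubstitute_def)
    then show ?thesis using X_sigma_letters[OF assms(1), of i] by auto
  qed
qed

lemma shift_shift_sigma_seq: "shift (shift (sigma_seq x)) = sigma_seq (shift x)"
proof
  fix i :: int
  have "(i + 1 + 1) div 2 = i div 2 + 1" by simp
  then show "shift (shift (sigma_seq x)) i = sigma_seq (shift x) i"
    by (simp add: shift_def sigma_seq_def)
qed

text \<open>The two-sided period-doubling sequence: the fixed point of \<open>\<sigma>\<^sup>2\<close> grown from the seed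
  \<open>x\<^sub>-\<^sub>1 x\<^sub>0 = 1 0\<close>, whose letter at \<open>i\<close> is the parity of the 2-adic valuation of \<open>i + 1\<close>.\<close>
definition period_doubling :: "int \<Rightarrow> nat" where
  "period_doubling i = (if i = -1 then 1 else multiplicity (2::int) (i + 1) mod 2)"

lemma multiplicity_two_odd: "odd (m::int) \<Longrightarrow> multiplicity 2 m = 0"
  by (simp add: not_dvd_imp_multiplicity_0)

lemma multiplicity_two_double: "(m::int) \<noteq> 0 \<Longrightarrow> multiplicity 2 (2 * m) = Suc (multiplicity 2 m)"
  by (rule multiplicity_times_same) auto

lemma period_doubling_block:
  assumes "r < 4"
  shows "period_doubling (4 * i + int r) = [0, 1, 0, period_doubling i] ! r"
proof -
  consider "r = 0" | "r = 1" | "r = 2" | "r = 3" using assms by linarith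
  then show ?thesis
  proof cases
    case 1
    have "4 * i \<noteq> -1" "odd (4 * i + 1)" by presburger+
    then show ?thesis using 1 by (simp add: period_doubling_def multiplicity_two_odd)
  next
    case 2
    have idx: "4 * i + int r + 1 = 2 * (2 * i + 1)" and ne: "4 * i + int r \<noteq> -1"
      and nz: "2 * i + 1 \<noteq> 0" and od: "odd (2 * i + 1)"
      using 2 by presburger+
    have "multiplicity (2::int) (4 * i + int r + 1) = Suc 0"
      by (simp only: idx multiplicity_two_double[OF nz] multiplicity_two_odd[OF od])
    then show ?thesis using ne 2 unfolding period_doubling_def by simp
  next
    case 3
    have "4 * i + 2 \<noteq> -1" "odd (4 * i + 2 + 1)" by presburger+
    then show ?thesis using 3 by (simp add: period_doubling_def multiplicity_two_odd)
  next
    case 4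
    show ?thesis
    proof (cases "i = -1")
      case True
      then show ?thesis using 4 by (simp add: period_doubling_def)
    next
      case False
      have idx: "4 * i + int r + 1 = 2 * (2 * (i + 1))" and ne: "4 * i + int r \<noteq> -1"
        and nz: "2 * (i + 1) \<noteq> 0" "i + 1 \<noteq> 0"
        using 4 False by presburger+
      have "multiplicity (2::int) (4 * i + int r + 1) = Suc (Suc (multiplicity 2 (i + 1)))"
        by (simp only: idx multiplicity_two_double[OF nz(1)] multiplicity_two_double[OF nz(2)])
      then show ?thesis using ne 4 False unfolding period_doubling_def by simp
    qed
  qed
qed

lemma nth_sigma_word_sigma_word:
  assumes "t < length w" "r < 4" "\<forall>a\<in>set w. a \<in> {0,1}"
  shows "sigma_word (sigma_word w) ! (4 * t + r) = [0, 1, 0, w ! t] ! r"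
proof -
  have "r = 0 \<or> r = 1 \<or> r = 2 \<or> r = 3" "w ! t \<in> {0,1}" using assms by auto
  moreover have "(4 * t + 1) div 2 = 2 * t" "(4 * t + 3) div 2 = 2 * t + 1"
    "odd (4 * t + 1)" "odd (4 * t + 3)" by auto
  ultimately show ?thesis using assms(1) by (auto simp: nth_sigma_word)
qed

lemma period_doubling_central_word:
  "\<forall>j < 2 * 4 ^ k. period_doubling (- (4 ^ k) + int j) = (sigma_pow (2 * k) 1 @ sigma_pow (2 * k) 0) ! j"
proof (induction k)
  case 0
  show ?case
  proof (intro allI impI)
    fix j :: nat
    assume "j < 2 * 4 ^ 0"
    then have "j = 0 \<or> j = 1" by auto
    then show "period_doubling (- (4 ^ 0) + int j) = (sigma_pow (2 * 0) 1 @ sigma_pow (2 * 0) 0) ! j"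
      by (auto simp: period_doubling_def multiplicity_two_odd)
  qed
next
  case (Suc k)
  define w where "w = sigma_pow (2 * k) 1 @ sigma_pow (2 * k) 0"
  have length_w: "length w = 2 * 4 ^ k" unfolding w_def by (simp add: power_mult)
  have letters_w: "\<forall>a\<in>set w. a \<in> {0,1}"
  proof
    fix a
    assume "a \<in> set w"
    then obtain t where "t < length w" "a = w ! t" by (auto simp: in_set_conv_nth)
    then show "a \<in> {0,1}" unfolding w_def
      using sigma_pow_letters[of 1 t "2 * k"] sigma_pow_letters[of 0 "t - 2 ^ (2 * k)" "2 * k"]
      by (auto simp: nth_append)
  qed
  have w_Suc: "sigma_pow (2 * Suc k) 1 @ sigma_pow (2 * Suc k) 0 = sigma_word (sigma_word w)"
    unfolding w_def by (simp del: funpow.simps add: numeral_2_eq_2 funpow.simps(2))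
  show ?case
  proof (intro allI impI)
    fix j :: nat
    assume j: "j < 2 * 4 ^ Suc k"
    define t where "t = j div 4"
    define r where "r = j mod 4"
    have jt: "j = 4 * t + r" "r < 4" and t: "t < 2 * 4 ^ k" using j unfolding t_def r_def by auto
    have index: "- (4 ^ Suc k) + int j = 4 * (- (4 ^ k) + int t) + int r" using jt by simp
    have "period_doubling (- (4 ^ Suc k) + int j) = [0, 1, 0, period_doubling (- (4 ^ k) + int t)] ! r"
      unfolding index by (rule period_doubling_block[OF jt(2)])
    also have "period_doubling (- (4 ^ k) + int t) = w ! t" using Suc t unfolding w_def by simp
    also have "[0, 1, 0, w ! t] ! r = sigma_word (sigma_word w) ! j"
      using nth_sigma_word_sigma_word[of t w r] length_w t jt letters_w by simp
    finally show "period_doubling (- (4 ^ Suc k) + int j) =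
        (sigma_pow (2 * Suc k) 1 @ sigma_pow (2 * Suc k) 0) ! j"
      using w_Suc by simp
  qed
qed

text \<open>A window of length \<open>n\<close> at \<open>i\<close> lies inside the central word \<open>\<sigma>\<^sup>2\<^sup>k(1)\<sigma>\<^sup>2\<^sup>k(0)\<close> once
  \<open>4\<^sup>k > |i| + n\<close>, and that word occurs in \<open>\<sigma>\<^sup>2\<^sup>k\<^sup>+\<^sup>2(0) = \<sigma>\<^sup>2\<^sup>k(0)\<sigma>\<^sup>2\<^sup>k(1)\<sigma>\<^sup>2\<^sup>k(0)\<sigma>\<^sup>2\<^sup>k(0)\<close>.\<close>
lemma period_doubling_in_X_sigma: "period_doubling \<in> X_sigma"
  unfolding X_sigma_iff
proof (intro conjI allI)
  fix i
  show "period_doubling i \<in> {0,1}" by (auto simp: period_doubling_def)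
next
  fix i :: int and n :: nat
  define k where "k = nat \<bar>i\<bar> + n + 1"
  have "k < 4 ^ k" by (induction k) auto
  then have big: "int (nat \<bar>i\<bar> + n + 1) \<le> 4 ^ k" unfolding k_def
    by (metis of_nat_le_iff less_imp_le of_nat_numeral of_nat_power)
  define s where "s = nat (i + 4 ^ k)"
  have s_int: "int s = i + 4 ^ k" using big unfolding s_def by simp
  have "int (s + n) \<le> int (2 * 4 ^ k)" using big s_int abs_ge_self[of i] by simp
  then have s: "int s = i + 4 ^ k" "s + n \<le> 2 * 4 ^ k" using s_int by (simp_all only: of_nat_le_iff)
  have split: "sigma_pow (2 * k + 2) 0 =
      (sigma_pow (2 * k) 0 @ sigma_pow (2 * k) 1) @ (sigma_pow (2 * k) 0 @ sigma_pow (2 * k) 0)"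
    by (simp only: numeral_2_eq_2 add_Suc_right add_0_right sigma_pow_Suc_split) simp
  have length_block: "length (sigma_pow (2 * k) 0) = 4 ^ k" by (simp add: power_mult)
  have "\<forall>j<n. sigma_pow (2 * k + 2) 0 ! (4 ^ k + s + j) = period_doubling (i + int j)"
  proof (intro allI impI)
    fix j
    assume j: "j < n"
    have "sigma_pow (2 * k + 2) 0 ! (4 ^ k + s + j) = (sigma_pow (2 * k) 1 @ sigma_pow (2 * k) 0) ! (s + j)"
      unfolding split using length_block s j by (simp add: nth_append)
    also have "\<dots> = period_doubling (- (4 ^ k) + int (s + j))"
    proof -
      have "s + j < 2 * 4 ^ k" using s j by simp
      then show ?thesis using period_doubling_central_word[of k] by presburger
    qed
    also have "- (4 ^ k) + int (s + j) = i + int j" using s by simp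
    finally show "sigma_pow (2 * k + 2) 0 ! (4 ^ k + s + j) = period_doubling (i + int j)" .
  qed
  moreover have "4 ^ k + s + n \<le> 2 ^ (2 * k + 2)" using s by (simp add: power_add power_mult)
  moreover have "(0::nat) \<in> {0,1}" "2 * k + 2 \<ge> 1" by simp_all
  ultimately show "\<exists>a\<in>{0,1}. \<exists>k\<ge>1. \<exists>p. p + n \<le> 2 ^ k \<and>
      (\<forall>j<n. sigma_pow k a ! (p + j) = period_doubling (i + int j))"
    by blast
qed

section \<open>Arithmetic in the 3-adic integers\<close>

definition Z3_mult :: "(nat \<Rightarrow> nat) \<Rightarrow> (nat \<Rightarrow> nat) \<Rightarrow> nat \<Rightarrow> nat" where
  "Z3_mult a b = (\<lambda>n. a n * b n mod 3 ^ n)"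

definition Z3_of_nat :: "nat \<Rightarrow> nat \<Rightarrow> nat" where
  "Z3_of_nat c = (\<lambda>n. c mod 3 ^ n)"

text \<open>\<open>(3\<^sup>n + 1) / 2\<close> is the inverse of 2 modulo \<open>3\<^sup>n\<close>.\<close>
definition Z3_half :: "nat \<Rightarrow> nat" where
  "Z3_half = (\<lambda>n. (3 ^ n + 1) div 2 mod 3 ^ n)"

lemma Z3I: "(\<And>n. a n < 3 ^ n) \<Longrightarrow> (\<And>n. a (Suc n) mod 3 ^ n = a n) \<Longrightarrow> a \<in> Z3"
  unfolding Z3_def by (blast intro: sym)

lemma Z3_less: "a \<in> Z3 \<Longrightarrow> a n < 3 ^ n"
  unfolding Z3_def by blast

lemma Z3_mod: "a \<in> Z3 \<Longrightarrow> a (Suc n) mod 3 ^ n = a n"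
  unfolding Z3_def by (blast intro: sym)

lemma mod_mod_three_power [simp]: "(b::nat) mod (3 * 3 ^ n) mod 3 ^ n = b mod 3 ^ n"
  by (rule mod_mod_cancel) simp

lemma Z3_plus1_in_Z3:
  assumes "a \<in> Z3"
  shows "Z3_plus1 a \<in> Z3"
proof (rule Z3I)
  fix n
  show "Z3_plus1 a n < 3 ^ n" by (simp add: Z3_plus1_def)
  have "Z3_plus1 a (Suc n) mod 3 ^ n = (a (Suc n) mod 3 ^ n + 1) mod 3 ^ n"
    by (simp add: Z3_plus1_def mod_simps)
  then show "Z3_plus1 a (Suc n) mod 3 ^ n = Z3_plus1 a n"
    using assms by (simp add: Z3_mod Z3_plus1_def)
qed

lemma Z3_mult_in_Z3:
  assumes "a \<in> Z3" "b \<in> Z3"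
  shows "Z3_mult a b \<in> Z3"
proof (rule Z3I)
  fix n
  show "Z3_mult a b n < 3 ^ n" by (simp add: Z3_mult_def)
  have "Z3_mult a b (Suc n) mod 3 ^ n = (a (Suc n) mod 3 ^ n) * (b (Suc n) mod 3 ^ n) mod 3 ^ n"
    by (simp add: Z3_mult_def mod_mult_eq)
  then show "Z3_mult a b (Suc n) mod 3 ^ n = Z3_mult a b n"
    using assms by (simp add: Z3_mod Z3_mult_def)
qed

lemma Z3_of_nat_in_Z3: "Z3_of_nat c \<in> Z3"
  by (rule Z3I) (simp_all add: Z3_of_nat_def)

lemma Z3_half_in_Z3: "Z3_half \<in> Z3"
proof (rule Z3I)
  fix n
  show "Z3_half n < 3 ^ n" by (simp add: Z3_half_def)
  have "Z3_half (Suc n) mod 3 ^ n = (3 ^ Suc n + 1) div 2 mod 3 ^ n"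
    unfolding Z3_half_def by (rule mod_mod_cancel) simp
  also have "(3 ^ Suc n + 1) div 2 = (3 ^ n + 1) div 2 + (3 ^ n :: nat)" by simp
  also have "((3 ^ n + 1) div 2 + 3 ^ n) mod 3 ^ n = Z3_half n"
    unfolding Z3_half_def by (rule mod_add_self2)
  finally show "Z3_half (Suc n) mod 3 ^ n = Z3_half n" .
qed

lemma Z3_mult_assoc: "Z3_mult (Z3_mult a b) c = Z3_mult a (Z3_mult b c)"
  by (simp add: Z3_mult_def mod_simps mult.assoc)

lemma Z3_mult_commute: "Z3_mult a b = Z3_mult b a"
  by (simp add: Z3_mult_def mult.commute)

lemma Z3_mult_one:
  assumes "a \<in> Z3"
  shows "Z3_mult (Z3_of_nat 1) a = a"
proof
  fix n
  have "Z3_mult (Z3_of_nat 1) a n = a n mod 3 ^ n"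
    unfolding Z3_mult_def Z3_of_nat_def mod_mult_left_eq by simp
  then show "Z3_mult (Z3_of_nat 1) a n = a n" using Z3_less[OF assms] by simp
qed

lemma Z3_two_mult_half: "Z3_mult (Z3_of_nat 2) Z3_half = Z3_of_nat 1"
proof
  fix n
  have "Z3_mult (Z3_of_nat 2) Z3_half n = 2 * ((3 ^ n + 1) div 2) mod 3 ^ n"
    unfolding Z3_mult_def Z3_of_nat_def Z3_half_def by (rule mod_mult_eq)
  also have "2 * ((3 ^ n + 1) div 2) = (3 ^ n + 1 :: nat)" by simp
  also have "(3 ^ n + 1) mod 3 ^ n = Z3_of_nat 1 n"
    unfolding Z3_of_nat_def by (rule mod_add_self1)
  finally show "Z3_mult (Z3_of_nat 2) Z3_half n = Z3_of_nat 1 n" .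
qed

lemma Z3_mult_half_two:
  assumes "a \<in> Z3"
  shows "Z3_mult Z3_half (Z3_mult (Z3_of_nat 2) a) = a"
proof -
  have "Z3_mult Z3_half (Z3_mult (Z3_of_nat 2) a) = Z3_mult (Z3_mult (Z3_of_nat 2) Z3_half) a"
    by (simp only: Z3_mult_assoc[symmetric] Z3_mult_commute[of Z3_half "Z3_of_nat 2"])
  then show ?thesis using assms by (simp only: Z3_two_mult_half Z3_mult_one)
qed

lemma Z3_mult_two_half:
  assumes "a \<in> Z3"
  shows "Z3_mult (Z3_of_nat 2) (Z3_mult Z3_half a) = a"
  using assms by (simp only: Z3_mult_assoc[symmetric] Z3_two_mult_half Z3_mult_one)

lemma Z3_plus1_plus1_mult_two:
  "Z3_plus1 (Z3_plus1 (Z3_mult (Z3_of_nat 2) a)) = Z3_mult (Z3_of_nat 2) (Z3_plus1 a)"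
proof
  fix n
  have "((2 mod 3 ^ n * a n mod 3 ^ n + 1) mod 3 ^ n + 1) mod 3 ^ n = (2 * a n + 2) mod (3::nat) ^ n"
    by (simp add: mod_simps)
  moreover have "2 mod 3 ^ n * ((a n + 1) mod 3 ^ n) mod 3 ^ n = (2 * a n + 2) mod (3::nat) ^ n"
    by (simp add: mod_simps algebra_simps)
  ultimately show "Z3_plus1 (Z3_plus1 (Z3_mult (Z3_of_nat 2) a)) n = Z3_mult (Z3_of_nat 2) (Z3_plus1 a) n"
    by (simp add: Z3_plus1_def Z3_mult_def Z3_of_nat_def)
qed

lemma continuous_map_discrete_product_local:
  fixes f :: "('i \<Rightarrow> 'a) \<Rightarrow> 'j \<Rightarrow> 'b"
  assumes local: "\<And>k. \<exists>j F. F \<in> A j \<rightarrow> B k \<and> (\<forall>x \<in> S \<inter> Pi\<^sub>E UNIV A. f x k = F (x j))"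
    and maps_to: "\<And>x. x \<in> S \<inter> Pi\<^sub>E UNIV A \<Longrightarrow> f x \<in> S'"
  shows "continuous_map (subtopology (product_topology (\<lambda>i. discrete_topology (A i)) UNIV) S)
           (subtopology (product_topology (\<lambda>k. discrete_topology (B k)) UNIV) S') f"
proof -
  let ?X = "subtopology (product_topology (\<lambda>i. discrete_topology (A i)) UNIV) S"
  have topspace: "topspace ?X = S \<inter> Pi\<^sub>E UNIV A" by auto
  have "continuous_map ?X (discrete_topology (B k)) (\<lambda>x. f x k)" for k
  proof -
    obtain j F where F: "F \<in> A j \<rightarrow> B k" and eq: "\<forall>x \<in> S \<inter> Pi\<^sub>E UNIV A. f x k = F (x j)"
      using local by blast
    have "continuous_map ?X (discrete_topology (A j)) (\<lambda>x. x j)"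
      by (rule continuous_map_from_subtopology)
        (rule continuous_map_product_projection[of j UNIV "\<lambda>i. discrete_topology (A i)", simplified])
    moreover have "continuous_map (discrete_topology (A j)) (discrete_topology (B k)) F"
      using F by (simp add: continuous_map_from_discrete_topology)
    ultimately have "continuous_map ?X (discrete_topology (B k)) (F \<circ> (\<lambda>x. x j))"
      by (rule continuous_map_compose)
    then show ?thesis by (rule continuous_map_eq) (use eq topspace in auto)
  qed
  then show ?thesis
    unfolding continuous_map_in_subtopology continuous_map_componentwise_UNIV
    using maps_to topspace by auto
qed

lemma topspace_X_sigma_top [simp]: "topspace X_sigma_top = X_sigma"
proof -
  have "X_sigma \<subseteq> Pi\<^sub>E UNIV (\<lambda>_. {0::nat,1})"
    unfolding PiE_UNIV_domain Pi_iff using X_sigma_letters by blast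
  then show ?thesis
    unfolding X_sigma_top_def topspace_subtopology topspace_product_topology topspace_discrete_topology
    by blast
qed

lemma topspace_Z3_top [simp]: "topspace Z3_top = Z3"
  by (auto simp: Z3_top_def Z3_def PiE_UNIV_domain)

lemma homeomorphic_maps_Z3_mult_two:
  "homeomorphic_maps Z3_top Z3_top (Z3_mult (Z3_of_nat 2)) (Z3_mult Z3_half)"
proof -
  have "continuous_map Z3_top Z3_top (Z3_mult c)" if "c \<in> Z3" for c
    unfolding Z3_top_def
  proof (rule continuous_map_discrete_product_local)
    show "\<exists>j F. F \<in> {..<3 ^ j} \<rightarrow> {..<3 ^ n} \<and> (\<forall>a \<in> Z3 \<inter> Pi\<^sub>E UNIV (\<lambda>n. {..<3 ^ n}). Z3_mult c a n = F (a j))"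
      for n
      by (rule exI[of _ n], rule exI[of _ "\<lambda>x. c n * x mod 3 ^ n"]) (auto simp: Z3_mult_def)
  qed (use that in \<open>auto intro: Z3_mult_in_Z3\<close>)
  then show ?thesis
    unfolding homeomorphic_maps_def
    using Z3_of_nat_in_Z3 Z3_half_in_Z3 Z3_mult_half_two Z3_mult_two_half by auto
qed

section \<open>The cylinder of substituted points\<close>

definition even_zero_cylinder :: "(int \<Rightarrow> nat) set" where
  "even_zero_cylinder = {x \<in> X_sigma. x 0 = 0 \<and> x 2 = 0}"

lemma even_zero_cylinder_even_zero: "x \<in> even_zero_cylinder \<Longrightarrow> x (2 * i) = 0"
  using X_sigma_even_zero by (auto simp: even_zero_cylinder_def)

lemma sigma_seq_in_even_zero_cylinder: "x \<in> X_sigma \<Longrightarrow> sigma_seq x \<in> even_zero_cylinder"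
  unfolding even_zero_cylinder_def using sigma_seq_in_X_sigma[of x] by (simp add: sigma_seq_def)

lemma shift_sigma_seq_notin_even_zero_cylinder:
  assumes "x \<in> X_sigma"
  shows "shift (sigma_seq x) \<notin> even_zero_cylinder"
proof
  assume "shift (sigma_seq x) \<in> even_zero_cylinder"
  then have "sigma_seq x 1 = 0" "sigma_seq x 3 = 0"
    by (simp_all add: even_zero_cylinder_def shift_def)
  then have "x 0 \<noteq> 0" "x 1 \<noteq> 0" by (simp_all add: sigma_seq_def split: if_splits)
  then show False using X_sigma_no_adjacent_nonzero[OF assms, of 0] by simp
qed

lemma clopen_even_zero_cylinder:
  "openin X_sigma_top even_zero_cylinder \<and> closedin X_sigma_top even_zero_cylinder"
proof -
  have proj: "continuous_map X_sigma_top (discrete_topology {0,1}) (\<lambda>x. x i)" for i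
    unfolding X_sigma_top_def
    by (rule continuous_map_from_subtopology)
      (rule continuous_map_product_projection[of i UNIV "\<lambda>_. discrete_topology {0,1}", simplified])
  have cylinder: "even_zero_cylinder =
      {x \<in> topspace X_sigma_top. x 0 \<in> {0}} \<inter> {x \<in> topspace X_sigma_top. x 2 \<in> {0}}"
    by (auto simp: even_zero_cylinder_def)
  have "openin X_sigma_top even_zero_cylinder"
    unfolding cylinder by (intro openin_Int openin_continuous_map_preimage[OF proj]) auto
  moreover have "closedin X_sigma_top even_zero_cylinder"
    unfolding cylinder by (intro closedin_Int closedin_continuous_map_preimage[OF proj]) auto
  ultimately show ?thesis ..
qed

lemma homeomorphic_maps_sigma_seq:
  "homeomorphic_maps X_sigma_top (subtopology X_sigma_top even_zero_cylinder) sigma_seq desubstitute"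
proof -
  have cylinder: "subtopology X_sigma_top even_zero_cylinder =
      subtopology (product_topology (\<lambda>_. discrete_topology {0,1}) UNIV) even_zero_cylinder"
    by (auto simp: X_sigma_top_def subtopology_subtopology even_zero_cylinder_def intro!: arg_cong2[where f=subtopology])
  have "continuous_map X_sigma_top (subtopology X_sigma_top even_zero_cylinder) sigma_seq"
    unfolding cylinder unfolding X_sigma_top_def
  proof (rule continuous_map_discrete_product_local)
    show "\<exists>j F. F \<in> {0,1} \<rightarrow> {0,1} \<and> (\<forall>x \<in> X_sigma \<inter> Pi\<^sub>E UNIV (\<lambda>_. {0,1}). sigma_seq x k = F (x j))"
      for k :: int
      by (rule exI[of _ "k div 2"], rule exI[of _ "\<lambda>a. if even k then 0 else if a = 0 then 1 else 0"])
        (auto simp: sigma_seq_def)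
  qed (simp add: sigma_seq_in_even_zero_cylinder)
  moreover have "continuous_map (subtopology X_sigma_top even_zero_cylinder) X_sigma_top desubstitute"
    unfolding cylinder unfolding X_sigma_top_def
  proof (rule continuous_map_discrete_product_local)
    show "\<exists>j F. F \<in> {0,1} \<rightarrow> {0,1} \<and>
        (\<forall>x \<in> even_zero_cylinder \<inter> Pi\<^sub>E UNIV (\<lambda>_. {0,1}). desubstitute x k = F (x j))" for k :: int
      by (rule exI[of _ "2 * k + 1"], rule exI[of _ "\<lambda>a. if a = 0 then 1 else 0"])
        (auto simp: desubstitute_def)
  next
    fix x
    assume "x \<in> even_zero_cylinder \<inter> Pi\<^sub>E UNIV (\<lambda>_. {0,1})"
    then show "desubstitute x \<in> X_sigma"
      using desubstitute_in_X_sigma even_zero_cylinder_even_zero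
      by (auto simp: even_zero_cylinder_def)
  qed
  ultimately show ?thesis
    unfolding homeomorphic_maps_def
    using desubstitute_sigma_seq sigma_seq_desubstitute even_zero_cylinder_even_zero
    by (auto simp: even_zero_cylinder_def)
qed

lemma homeomorphic_maps_subtopology_mem:
  "homeomorphic_maps X (subtopology X U) h g \<Longrightarrow> x \<in> topspace X \<Longrightarrow> h x \<in> U"
  unfolding homeomorphic_maps_def using continuous_map_image_subset_topspace by fastforce

lemma top_conjugate_induced_map_return_two:
  assumes hom: "homeomorphic_maps X (subtopology X U) h g"
    and invariant: "\<And>x. x \<in> topspace X \<Longrightarrow> T x \<in> topspace X"
    and leaves: "\<And>x. x \<in> topspace X \<Longrightarrow> T (h x) \<notin> U"
    and square: "\<And>x. x \<in> topspace X \<Longrightarrow> T (T (h x)) = h (T x)"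
  shows "top_conjugate X T (subtopology X U) (induced_map T U)"
proof -
  have "h (T x) = induced_map T U (h x)" if x: "x \<in> topspace X" for x
  proof -
    have "return_time T U (h x) = 2"
      unfolding return_time_def
    proof (rule Least_equality)
      show "0 < (2::nat) \<and> (T ^^ 2) (h x) \<in> U"
        using square[OF x] homeomorphic_maps_subtopology_mem[OF hom invariant[OF x]]
        by (simp add: numeral_2_eq_2)
    next
      fix n :: nat
      assume "0 < n \<and> (T ^^ n) (h x) \<in> U"
      moreover have "n \<noteq> 1" using calculation leaves[OF x] by auto
      ultimately show "2 \<le> n" by simp
    qed
    then show ?thesis using square[OF x] by (simp add: induced_map_def numeral_2_eq_2)
  qed
  moreover have "homeomorphic_map X (subtopology X U) h"
    using hom homeomorphic_map_maps by blast
  ultimately show ?thesis unfolding top_conjugate_def by blast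
qed

lemma self_induced_if_return_two:
  assumes hom: "homeomorphic_maps X (subtopology X U) h g"
    and invariant: "\<And>x. x \<in> topspace X \<Longrightarrow> T x \<in> topspace X"
    and leaves: "\<And>x. x \<in> topspace X \<Longrightarrow> T (h x) \<notin> U"
    and square: "\<And>x. x \<in> topspace X \<Longrightarrow> T (T (h x)) = h (T x)"
    and nonempty: "topspace X \<noteq> {}"
    and clopen: "openin X U" "closedin X U"
  shows "self_induced X T"
  unfolding self_induced_def
proof (intro exI[of _ U] conjI clopen)
  obtain x where x: "x \<in> topspace X" using nonempty by blast
  have "h x \<in> U" using homeomorphic_maps_subtopology_mem[OF hom x] .
  moreover have "T (h x) \<in> topspace X - U"
    using leaves[OF x] openin_subset[OF clopen(1)] calculation by (blast intro: invariant)
  ultimately show "U \<noteq> {}" "U \<subset> topspace X" using openin_subset[OF clopen(1)] by blast+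
  show "top_conjugate X T (subtopology X U) (induced_map T U)"
    using top_conjugate_induced_map_return_two[OF hom invariant leaves square] .
qed

definition sigma_double :: "(int \<Rightarrow> nat) \<times> (nat \<Rightarrow> nat) \<Rightarrow> (int \<Rightarrow> nat) \<times> (nat \<Rightarrow> nat)" where
  "sigma_double = (\<lambda>(x, z). (sigma_seq x, Z3_mult (Z3_of_nat 2) z))"

lemma homeomorphic_maps_sigma_double:
  "homeomorphic_maps (prod_topology X_sigma_top Z3_top)
     (subtopology (prod_topology X_sigma_top Z3_top) (even_zero_cylinder \<times> Z3))
     sigma_double (\<lambda>(x, z). (desubstitute x, Z3_mult Z3_half z))"
proof -
  have cylinder: "subtopology (prod_topology X_sigma_top Z3_top) (even_zero_cylinder \<times> Z3) =
      prod_topology (subtopology X_sigma_top even_zero_cylinder) Z3_top"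
    using subtopology_Times[of X_sigma_top Z3_top] subtopology_topspace[of Z3_top] by simp
  show ?thesis
    unfolding sigma_double_def cylinder homeomorphic_maps_prod
    using homeomorphic_maps_sigma_seq homeomorphic_maps_Z3_mult_two by (intro disjI2 conjI)
qed

lemma T_map_in_X_sigma_times_Z3: "p \<in> X_sigma \<times> Z3 \<Longrightarrow> T_map p \<in> X_sigma \<times> Z3"
  using shift_in_X_sigma Z3_plus1_in_Z3 by (auto simp: T_map_def)

lemma T_map_sigma_double_notin: "p \<in> X_sigma \<times> Z3 \<Longrightarrow> T_map (sigma_double p) \<notin> even_zero_cylinder \<times> Z3"
  using shift_sigma_seq_notin_even_zero_cylinder by (auto simp: T_map_def sigma_double_def)

lemma T_map_T_map_sigma_double: "T_map (T_map (sigma_double p)) = sigma_double (T_map p)"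
  by (cases p) (simp add: T_map_def sigma_double_def shift_shift_sigma_seq Z3_plus1_plus1_mult_two)

theorem mainTheorem13:
  shows "self_induced (prod_topology X_sigma_top Z3_top) T_map"
proof (rule self_induced_if_return_two[OF homeomorphic_maps_sigma_double])
  show "topspace (prod_topology X_sigma_top Z3_top) \<noteq> {}"
    using period_doubling_in_X_sigma Z3_of_nat_in_Z3 by auto
  show "openin (prod_topology X_sigma_top Z3_top) (even_zero_cylinder \<times> Z3)"
    "closedin (prod_topology X_sigma_top Z3_top) (even_zero_cylinder \<times> Z3)"
    using clopen_even_zero_cylinder openin_topspace[of Z3_top] closedin_topspace[of Z3_top]
    by (simp_all add: openin_prod_Times_iff closedin_prod_Times_iff)
qed (simp_all add: T_map_in_X_sigma_times_Z3 T_map_sigma_double_notin T_map_T_map_sigma_double)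

end
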